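(* Let $(\mathcal{X},\mathcal{F},\mu)$ be a probability space, let $(\mathcal{M},\mathfrak{M})$ be a measurable space, and let $f\colon \mathcal{X}\times\mathcal{X}\to\mathcal{M}$ be a measurable function. Assume $f$ is antisymmetric in the following sense: there is a measurable map $i\colon\mathcal{M}\to\mathcal{M}$ with $i(i(m))=m$ for every $m\in\mathcal{M}$ and $f(x,y)=i(f(y,x))$ for all $x,y\in\mathcal{X}$. Let $X$ and $Y$ be independent random variables with law $\mu$ and put $F=f(X,Y)$. (1) If $F$ and $Y$ are independent, then $X$ and $F$ are also independent; hence $X$, $Y$, $F$ are pairwise independent. (2) If $X$ and $F$ are independent, then $F$ and $Y$ are also independent; hence $X$, $Y$, $F$ are pairwise independent. Moreover, whenever $X,Y,F$ are pairwise independent (in particular in cases (1) and (2)), the following hold: (Hex$'$) for every balanced decomposition $(\mu_0,\mu_1)$ of $\mu$, if for $i=0,1$ the pair $(X_i,Y_i)$ consists of independent random variables each of law $\mu_i$ and $F_i=f(X_i,Y_i)$, then $F_0$ and $F_1$ have the same distribution on $\mathcal{M}$; (Hex$''$) for any two balanced decompositions $(\mu_0,\mu_1)$ and $(\nu_0,\nu_1)$ of $\mu$, if for $i=0,1$, $X_i$ has law $\mu_i$, $Y_i$ has law $\nu_i$, $X_i$ and $Y_i$ are independent, and $F_i=f(X_i,Y_i)$, then $F_0$ and $F_1$ have the same distribution on $\mathcal{M}$.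
   Context: A balanced decomposition of a probability measure $\mu$ is a pair $(\mu_0,\mu_1)$ of probability measures on the same space such that $\mu_0+\mu_1=2\mu$. Random variables $X,Y,F$ are pairwise independent if each of the pairs $(X,Y)$, $(X,F)$, $(Y,F)$ is independent. *)

theory Defs
  imports "HOL-Probability.Probability"
begin

definition balanced_decomposition :: "'a measure \<Rightarrow> 'a measure \<Rightarrow> 'a measure \<Rightarrow> bool" where
  "balanced_decomposition \<mu> \<mu>0 \<mu>1 \<longleftrightarrow>
     prob_space \<mu>0 \<and> prob_space \<mu>1 \<and> sets \<mu>0 = sets \<mu> \<and> sets \<mu>1 = sets \<mu> \<and>
     (\<forall>A\<in>sets \<mu>. emeasure \<mu>0 A + emeasure \<mu>1 A = 2 * emeasure \<mu> A)"

text \<open>Independence of two random variables A, B on the probability space P with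
  values in possibly different measurable spaces Ma, Mb (the library's indep_var
  requires both targets to have the same type).\<close>
definition indep_rv :: "'c measure \<Rightarrow> 'a measure \<Rightarrow> ('c \<Rightarrow> 'a) \<Rightarrow> 'b measure \<Rightarrow> ('c \<Rightarrow> 'b) \<Rightarrow> bool" where
  "indep_rv P Ma A Mb B \<longleftrightarrow>
     A \<in> measurable P Ma \<and> B \<in> measurable P Mb \<and>
     (\<forall>a\<in>sets Ma. \<forall>b\<in>sets Mb.
        measure P (A -` a \<inter> B -` b \<inter> space P) = measure P (A -` a \<inter> space P) * measure P (B -` b \<inter> space P))"

end

theory Submission
  imports Defs
begin

(* Everything happens on the product space mu x mu, the law of (X, Y): independence of X, Y and
   F = f(X, Y) is independence of fst, snd and f under mu x mu. The coordinate swap preserves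
   mu x mu, exchanges fst and snd and, by antisymmetry, turns f into i o f; this exchanges
   "X indep F" and "F indep Y".
   If A = f^-1(B) is independent of both coordinates, then almost all horizontal and vertical
   sections of A have mu-measure c = (mu x mu)(A). Integrating sections against a balanced
   decomposition replaces the two halves by 2 mu, which yields
   (mu1 x nu0)(A) + (mu1 x nu1)(A) = 2c = (mu0 x nu0)(A) + (mu1 x nu0)(A),
   hence (mu0 x nu0)(A) = (mu1 x nu1)(A): the laws of F0 and F1 agree. *)

lemma indep_rv_commute: "indep_rv P Ma A Mb B \<Longrightarrow> indep_rv P Mb B Ma A"
  unfolding indep_rv_def by (simp add: ac_simps)

lemma indep_rv_cong:
  assumes A: "\<And>\<omega>. \<omega> \<in> space P \<Longrightarrow> A \<omega> = A' \<omega>"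
    and B: "\<And>\<omega>. \<omega> \<in> space P \<Longrightarrow> B \<omega> = B' \<omega>"
  shows "indep_rv P Ma A Mb B \<longleftrightarrow> indep_rv P Ma A' Mb B'"
proof -
  have "A -` a \<inter> space P = A' -` a \<inter> space P" "B -` b \<inter> space P = B' -` b \<inter> space P"
    "A -` a \<inter> B -` b \<inter> space P = A' -` a \<inter> B' -` b \<inter> space P" for a b
    using A B by auto
  then show ?thesis
    by (simp add: indep_rv_def measurable_cong[OF A] measurable_cong[OF B])
qed

lemma indep_rvD:
  assumes "indep_rv P Ma A Mb B" and "a \<in> sets Ma" and "b \<in> sets Mb"
  shows "measure P (A -` a \<inter> B -` b \<inter> space P) = measure P (A -` a \<inter> space P) * measure P (B -` b \<inter> space P)"
  using assms unfolding indep_rv_def by blast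

lemma indep_rv_compose_right:
  assumes indep: "indep_rv P Ma A Mb B" and g: "g \<in> measurable Mb Mc"
  shows "indep_rv P Ma A Mc (g \<circ> B)"
  unfolding indep_rv_def
proof (intro conjI ballI)
  have B: "B \<in> measurable P Mb" using indep by (simp add: indep_rv_def)
  then show "g \<circ> B \<in> measurable P Mc" using g by (rule measurable_comp)
  show "A \<in> measurable P Ma" using indep by (simp add: indep_rv_def)
  fix a c assume a: "a \<in> sets Ma" and c: "c \<in> sets Mc"
  let ?b = "g -` c \<inter> space Mb"
  have pre: "A -` a \<inter> B -` ?b \<inter> space P = A -` a \<inter> (g \<circ> B) -` c \<inter> space P"
    "B -` ?b \<inter> space P = (g \<circ> B) -` c \<inter> space P"
    using measurable_space[OF B] by auto
  show "measure P (A -` a \<inter> (g \<circ> B) -` c \<inter> space P)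
      = measure P (A -` a \<inter> space P) * measure P ((g \<circ> B) -` c \<inter> space P)"
    using indep_rvD[OF indep a measurable_sets[OF g c]] unfolding pre .
qed

lemma indep_rv_distr_iff:
  assumes Z: "Z \<in> measurable P N" and g: "g \<in> measurable N Ma" and h: "h \<in> measurable N Mb"
  shows "indep_rv (distr P N Z) Ma g Mb h \<longleftrightarrow> indep_rv P Ma (g \<circ> Z) Mb (h \<circ> Z)"
proof -
  have distr_vimage: "measure (distr P N Z) (E \<inter> space N) = measure P (Z -` E \<inter> space P)"
    if "E \<inter> space N \<in> sets N" for E
  proof -
    have "measure (distr P N Z) (E \<inter> space N) = measure P (Z -` (E \<inter> space N) \<inter> space P)"
      by (rule measure_distr[OF Z that])
    also have "Z -` (E \<inter> space N) \<inter> space P = Z -` E \<inter> space P"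
      using measurable_space[OF Z] by auto
    finally show ?thesis .
  qed
  have "measure (distr P N Z) (g -` a \<inter> h -` b \<inter> space N)
          = measure P ((g \<circ> Z) -` a \<inter> (h \<circ> Z) -` b \<inter> space P)"
    "measure (distr P N Z) (g -` a \<inter> space N) = measure P ((g \<circ> Z) -` a \<inter> space P)"
    "measure (distr P N Z) (h -` b \<inter> space N) = measure P ((h \<circ> Z) -` b \<inter> space P)"
    if a: "a \<in> sets Ma" and b: "b \<in> sets Mb" for a b
  proof -
    have ga: "g -` a \<inter> space N \<in> sets N" and hb: "h -` b \<inter> space N \<in> sets N"
      using measurable_sets[OF g a] measurable_sets[OF h b] .
    have "g -` a \<inter> h -` b \<inter> space N = (g -` a \<inter> space N) \<inter> (h -` b \<inter> space N)"
      by auto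
    then have gahb: "g -` a \<inter> h -` b \<inter> space N \<in> sets N"
      using ga hb by simp
    have "Z -` (g -` a \<inter> h -` b) = (g \<circ> Z) -` a \<inter> (h \<circ> Z) -` b" "Z -` g -` a = (g \<circ> Z) -` a"
      "Z -` h -` b = (h \<circ> Z) -` b"
      by auto
    then show "measure (distr P N Z) (g -` a \<inter> h -` b \<inter> space N)
          = measure P ((g \<circ> Z) -` a \<inter> (h \<circ> Z) -` b \<inter> space P)"
      "measure (distr P N Z) (g -` a \<inter> space N) = measure P ((g \<circ> Z) -` a \<inter> space P)"
      "measure (distr P N Z) (h -` b \<inter> space N) = measure P ((h \<circ> Z) -` b \<inter> space P)"
      using distr_vimage[OF gahb] distr_vimage[OF ga] distr_vimage[OF hb] by simp_all
  qed
  moreover have "g \<circ> Z \<in> measurable P Ma" "h \<circ> Z \<in> measurable P Mb"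
    using Z g h by (auto intro: measurable_comp)
  ultimately show ?thesis
    using g h by (simp add: indep_rv_def)
qed

lemma distr_pair_indep_rv:
  assumes P: "prob_space P" and indep: "indep_rv P Ma X Mb Y"
  shows "distr P (Ma \<Otimes>\<^sub>M Mb) (\<lambda>\<omega>. (X \<omega>, Y \<omega>)) = distr P Ma X \<Otimes>\<^sub>M distr P Mb Y"
proof (rule pair_measure_eqI[symmetric])
  interpret prob_space P by fact
  have X: "X \<in> measurable P Ma" and Y: "Y \<in> measurable P Mb"
    using indep by (auto simp: indep_rv_def)
  show "sigma_finite_measure (distr P Ma X)" "sigma_finite_measure (distr P Mb Y)"
    using prob_space_distr[OF X] prob_space_distr[OF Y] by (auto intro: prob_space_imp_sigma_finite)
  show "sets (distr P Ma X \<Otimes>\<^sub>M distr P Mb Y) = sets (distr P (Ma \<Otimes>\<^sub>M Mb) (\<lambda>\<omega>. (X \<omega>, Y \<omega>)))"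
    by (simp cong: sets_pair_measure_cong)
  fix a b assume "a \<in> sets (distr P Ma X)" "b \<in> sets (distr P Mb Y)"
  then have a: "a \<in> sets Ma" and b: "b \<in> sets Mb" by auto
  have "(\<lambda>\<omega>. (X \<omega>, Y \<omega>)) -` (a \<times> b) \<inter> space P = X -` a \<inter> Y -` b \<inter> space P"
    by auto
  then have "emeasure (distr P (Ma \<Otimes>\<^sub>M Mb) (\<lambda>\<omega>. (X \<omega>, Y \<omega>))) (a \<times> b)
      = measure P (X -` a \<inter> space P) * measure P (Y -` b \<inter> space P)"
    using X Y a b by (simp add: emeasure_distr emeasure_eq_measure indep_rvD[OF indep a b])
  then show "emeasure (distr P Ma X) a * emeasure (distr P Mb Y) b
      = emeasure (distr P (Ma \<Otimes>\<^sub>M Mb) (\<lambda>\<omega>. (X \<omega>, Y \<omega>))) (a \<times> b)"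
    using X Y a b by (simp add: emeasure_distr emeasure_eq_measure ennreal_mult)
qed

lemma distr_comp_pair_indep_rv:
  assumes "prob_space P" and indep: "indep_rv P Ma X Mb Y" and f: "f \<in> measurable (Ma \<Otimes>\<^sub>M Mb) M"
  shows "distr P M (\<lambda>\<omega>. f (X \<omega>, Y \<omega>)) = distr (distr P Ma X \<Otimes>\<^sub>M distr P Mb Y) M f"
proof -
  have "(\<lambda>\<omega>. (X \<omega>, Y \<omega>)) \<in> measurable P (Ma \<Otimes>\<^sub>M Mb)"
    using indep by (auto simp: indep_rv_def)
  from distr_distr[OF f this] show ?thesis
    by (simp add: distr_pair_indep_rv[OF assms(1,2)] comp_def)
qed

lemma (in pair_prob_space) AE_emeasure_Pair_eq_of_indep_rv_fst:
  assumes indep: "indep_rv (M1 \<Otimes>\<^sub>M M2) M1 fst N g" and B: "B \<in> sets N"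
  defines "A \<equiv> g -` B \<inter> space (M1 \<Otimes>\<^sub>M M2)"
  shows "AE x in M1. emeasure M2 (Pair x -` A) = emeasure (M1 \<Otimes>\<^sub>M M2) A"
proof (rule M1.density_unique2)
  have A: "A \<in> sets (M1 \<Otimes>\<^sub>M M2)"
    using indep B unfolding A_def indep_rv_def by (auto intro: measurable_sets)
  then show "(\<lambda>x. emeasure M2 (Pair x -` A)) \<in> borel_measurable M1"
    by (rule measurable_emeasure_Pair1)
  show "(\<lambda>x. emeasure (M1 \<Otimes>\<^sub>M M2) A) \<in> borel_measurable M1"
    by simp
  fix C assume C: "C \<in> sets M1"
  have CA: "C \<times> space M2 \<inter> A \<in> sets (M1 \<Otimes>\<^sub>M M2)"
    using A C by auto
  have fst_C: "fst -` C \<inter> space (M1 \<Otimes>\<^sub>M M2) = C \<times> space M2"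
    using sets.sets_into_space[OF C] by (auto simp: space_pair_measure)
  have "(\<integral>\<^sup>+x\<in>C. emeasure M2 (Pair x -` A) \<partial>M1)
      = (\<integral>\<^sup>+x. emeasure M2 (Pair x -` (C \<times> space M2 \<inter> A)) \<partial>M1)"
    using sets.sets_into_space[OF A]
    by (intro nn_integral_cong)
      (auto simp: indicator_def space_pair_measure intro!: arg_cong[where f = "emeasure M2"])
  also have "\<dots> = emeasure (M1 \<Otimes>\<^sub>M M2) (C \<times> space M2 \<inter> A)"
    by (rule M2.emeasure_pair_measure_alt[symmetric, OF CA])
  also have "C \<times> space M2 \<inter> A = fst -` C \<inter> g -` B \<inter> space (M1 \<Otimes>\<^sub>M M2)"
    using fst_C by (auto simp: A_def)
  also have "emeasure (M1 \<Otimes>\<^sub>M M2) \<dots> = emeasure (M1 \<Otimes>\<^sub>M M2) (C \<times> space M2) * emeasure (M1 \<Otimes>\<^sub>M M2) A"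
    using indep_rvD[OF indep C B] by (simp add: P.emeasure_eq_measure A_def fst_C ennreal_mult)
  also have "\<dots> = emeasure (M1 \<Otimes>\<^sub>M M2) A * emeasure M1 C"
    using C by (simp add: M2.emeasure_pair_measure_Times M2.emeasure_space_1 mult.commute)
  also have "\<dots> = (\<integral>\<^sup>+x\<in>C. emeasure (M1 \<Otimes>\<^sub>M M2) A \<partial>M1)"
    using C by (simp only: nn_integral_cmult_indicator)
  finally show "(\<integral>\<^sup>+x\<in>C. emeasure M2 (Pair x -` A) \<partial>M1)
      = (\<integral>\<^sup>+x\<in>C. emeasure (M1 \<Otimes>\<^sub>M M2) A \<partial>M1)" .
qed

lemma (in pair_prob_space) AE_emeasure_Pair_eq_of_indep_rv_snd:
  assumes indep: "indep_rv (M1 \<Otimes>\<^sub>M M2) N g M2 snd" and B: "B \<in> sets N"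
  defines "A \<equiv> g -` B \<inter> space (M1 \<Otimes>\<^sub>M M2)"
  shows "AE y in M2. emeasure M1 ((\<lambda>x. (x, y)) -` A) = emeasure (M1 \<Otimes>\<^sub>M M2) A"
proof -
  interpret swapped: pair_prob_space M2 M1 by unfold_locales
  let ?s = "\<lambda>(x, y). (y, x)"
  have s: "?s \<in> measurable (M2 \<Otimes>\<^sub>M M1) (M1 \<Otimes>\<^sub>M M2)"
    by (rule measurable_pair_swap')
  have g: "g \<in> measurable (M1 \<Otimes>\<^sub>M M2) N"
    using indep by (simp add: indep_rv_def)
  have swap_snd: "snd \<circ> ?s = fst"
    by auto
  have "indep_rv (M2 \<Otimes>\<^sub>M M1) N (g \<circ> ?s) M2 (snd \<circ> ?s)"
    using indep distr_pair_swap indep_rv_distr_iff[OF s g measurable_snd] by simp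
  then have "indep_rv (M2 \<Otimes>\<^sub>M M1) M2 fst N (g \<circ> ?s)"
    unfolding swap_snd by (rule indep_rv_commute)
  from swapped.AE_emeasure_Pair_eq_of_indep_rv_fst[OF this B]
  have "AE y in M2. emeasure M1 (Pair y -` (?s -` A \<inter> space (M2 \<Otimes>\<^sub>M M1)))
      = emeasure (M2 \<Otimes>\<^sub>M M1) (?s -` A \<inter> space (M2 \<Otimes>\<^sub>M M1))"
    unfolding A_def by (rule back_subst) (auto simp: space_pair_measure)
  moreover have "emeasure (M2 \<Otimes>\<^sub>M M1) (?s -` A \<inter> space (M2 \<Otimes>\<^sub>M M1)) = emeasure (M1 \<Otimes>\<^sub>M M2) A"
    using s g B by (subst distr_pair_swap) (simp add: emeasure_distr A_def measurable_sets)
  moreover have "Pair y -` (?s -` A \<inter> space (M2 \<Otimes>\<^sub>M M1)) = (\<lambda>x. (x, y)) -` A" if "y \<in> space M2" for y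
    using that by (auto simp: A_def space_pair_measure)
  ultimately show ?thesis
    by (auto elim!: AE_mp)
qed

lemma balanced_decompositionD:
  assumes "balanced_decomposition \<mu> \<mu>0 \<mu>1"
  shows "prob_space \<mu>0" "prob_space \<mu>1" "sets \<mu>0 = sets \<mu>" "sets \<mu>1 = sets \<mu>"
    and "A \<in> sets \<mu> \<Longrightarrow> emeasure \<mu>0 A + emeasure \<mu>1 A = 2 * emeasure \<mu> A"
  using assms by (auto simp: balanced_decomposition_def)

lemma balanced_decomposition_commute:
  "balanced_decomposition \<mu> \<mu>0 \<mu>1 \<Longrightarrow> balanced_decomposition \<mu> \<mu>1 \<mu>0"
  by (auto simp: balanced_decomposition_def add.commute)

lemma AE_balanced_decomposition:
  assumes bd: "balanced_decomposition \<mu> \<mu>0 \<mu>1" and ae: "AE x in \<mu>. Q x"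
  shows "AE x in \<mu>0. Q x"
proof -
  from ae obtain N where N: "{x \<in> space \<mu>. \<not> Q x} \<subseteq> N" "N \<in> sets \<mu>" "emeasure \<mu> N = 0"
    by (auto elim!: AE_E)
  have "emeasure \<mu>0 N = 0"
    using balanced_decompositionD(5)[OF bd N(2)] N(3) by simp
  moreover have "space \<mu>0 = space \<mu>"
    using balanced_decompositionD(3)[OF bd] by (rule sets_eq_imp_space_eq)
  ultimately show ?thesis
    using N balanced_decompositionD(3)[OF bd] by (intro AE_I[of _ _ N]) auto
qed

lemma emeasure_pair_balanced_decomposition_right:
  assumes bd: "balanced_decomposition \<mu> \<nu>0 \<nu>1" and \<rho>: "prob_space \<rho>"
    and A: "A \<in> sets (\<rho> \<Otimes>\<^sub>M \<mu>)" and sections: "AE x in \<rho>. emeasure \<mu> (Pair x -` A) = c"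
  shows "emeasure (\<rho> \<Otimes>\<^sub>M \<nu>0) A + emeasure (\<rho> \<Otimes>\<^sub>M \<nu>1) A = 2 * c"
proof -
  interpret \<nu>0: prob_space \<nu>0 using balanced_decompositionD(1)[OF bd] .
  interpret \<nu>1: prob_space \<nu>1 using balanced_decompositionD(2)[OF bd] .
  have A0: "A \<in> sets (\<rho> \<Otimes>\<^sub>M \<nu>0)" and A1: "A \<in> sets (\<rho> \<Otimes>\<^sub>M \<nu>1)"
    using A balanced_decompositionD(3,4)[OF bd] by (simp_all cong: sets_pair_measure_cong)
  have "emeasure (\<rho> \<Otimes>\<^sub>M \<nu>0) A + emeasure (\<rho> \<Otimes>\<^sub>M \<nu>1) A
      = (\<integral>\<^sup>+x. emeasure \<nu>0 (Pair x -` A) + emeasure \<nu>1 (Pair x -` A) \<partial>\<rho>)"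
    using A0 A1 by (simp add: \<nu>0.emeasure_pair_measure_alt \<nu>1.emeasure_pair_measure_alt
        nn_integral_add \<nu>0.measurable_emeasure_Pair \<nu>1.measurable_emeasure_Pair)
  also have "\<dots> = (\<integral>\<^sup>+x. 2 * emeasure \<mu> (Pair x -` A) \<partial>\<rho>)"
    using A by (intro nn_integral_cong balanced_decompositionD(5)[OF bd] sets_Pair1)
  also have "\<dots> = (\<integral>\<^sup>+x. 2 * c \<partial>\<rho>)"
    using sections by (intro nn_integral_cong_AE) auto
  also have "\<dots> = 2 * c"
    using prob_space.emeasure_space_1[OF \<rho>] by simp
  finally show ?thesis .
qed

lemma emeasure_pair_balanced_decomposition_left:
  assumes bd: "balanced_decomposition \<mu> \<mu>0 \<mu>1" and \<sigma>: "prob_space \<sigma>"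
    and A: "A \<in> sets (\<mu> \<Otimes>\<^sub>M \<sigma>)" and sections: "AE y in \<sigma>. emeasure \<mu> ((\<lambda>x. (x, y)) -` A) = c"
  shows "emeasure (\<mu>0 \<Otimes>\<^sub>M \<sigma>) A + emeasure (\<mu>1 \<Otimes>\<^sub>M \<sigma>) A = 2 * c"
proof -
  interpret \<mu>0: pair_prob_space \<mu>0 \<sigma>
    using balanced_decompositionD(1)[OF bd] \<sigma>
    by (simp add: pair_prob_space_def pair_sigma_finite_def prob_space_imp_sigma_finite)
  interpret \<mu>1: pair_prob_space \<mu>1 \<sigma>
    using balanced_decompositionD(2)[OF bd] \<sigma>
    by (simp add: pair_prob_space_def pair_sigma_finite_def prob_space_imp_sigma_finite)
  have A0: "A \<in> sets (\<mu>0 \<Otimes>\<^sub>M \<sigma>)" and A1: "A \<in> sets (\<mu>1 \<Otimes>\<^sub>M \<sigma>)"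
    using A balanced_decompositionD(3,4)[OF bd] by (simp_all cong: sets_pair_measure_cong)
  have "emeasure (\<mu>0 \<Otimes>\<^sub>M \<sigma>) A + emeasure (\<mu>1 \<Otimes>\<^sub>M \<sigma>) A
      = (\<integral>\<^sup>+y. emeasure \<mu>0 ((\<lambda>x. (x, y)) -` A) + emeasure \<mu>1 ((\<lambda>x. (x, y)) -` A) \<partial>\<sigma>)"
    using A0 A1 by (simp add: \<mu>0.emeasure_pair_measure_alt2 \<mu>1.emeasure_pair_measure_alt2
        nn_integral_add \<mu>0.measurable_emeasure_Pair2 \<mu>1.measurable_emeasure_Pair2)
  also have "\<dots> = (\<integral>\<^sup>+y. 2 * emeasure \<mu> ((\<lambda>x. (x, y)) -` A) \<partial>\<sigma>)"
    using A by (intro nn_integral_cong balanced_decompositionD(5)[OF bd] sets_Pair2)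
  also have "\<dots> = (\<integral>\<^sup>+y. 2 * c \<partial>\<sigma>)"
    using sections by (intro nn_integral_cong_AE) auto
  also have "\<dots> = 2 * c"
    using prob_space.emeasure_space_1[OF \<sigma>] by simp
  finally show ?thesis .
qed

lemma emeasure_pair_balanced_decompositions_eq:
  assumes A: "A \<in> sets (\<mu> \<Otimes>\<^sub>M \<mu>)" and c: "c \<noteq> \<infinity>"
    and sections1: "AE x in \<mu>. emeasure \<mu> (Pair x -` A) = c"
    and sections2: "AE y in \<mu>. emeasure \<mu> ((\<lambda>x. (x, y)) -` A) = c"
    and bd\<mu>: "balanced_decomposition \<mu> \<mu>0 \<mu>1" and bd\<nu>: "balanced_decomposition \<mu> \<nu>0 \<nu>1"
  shows "emeasure (\<mu>0 \<Otimes>\<^sub>M \<nu>0) A = emeasure (\<mu>1 \<Otimes>\<^sub>M \<nu>1) A"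
proof -
  have "emeasure (\<mu>1 \<Otimes>\<^sub>M \<nu>0) A + emeasure (\<mu>1 \<Otimes>\<^sub>M \<nu>1) A = 2 * c"
    using A balanced_decompositionD(2,4)[OF bd\<mu>]
    by (intro emeasure_pair_balanced_decomposition_right[OF bd\<nu>]
        AE_balanced_decomposition[OF balanced_decomposition_commute[OF bd\<mu>] sections1])
      (simp_all cong: sets_pair_measure_cong)
  moreover have "emeasure (\<mu>0 \<Otimes>\<^sub>M \<nu>0) A + emeasure (\<mu>1 \<Otimes>\<^sub>M \<nu>0) A = 2 * c"
    using A balanced_decompositionD(1,3)[OF bd\<nu>]
    by (intro emeasure_pair_balanced_decomposition_left[OF bd\<mu>] AE_balanced_decomposition[OF bd\<nu>]
        sections2) (simp_all cong: sets_pair_measure_cong)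
  moreover have "2 * c \<noteq> \<infinity>"
    using c by (simp add: ennreal_mult_eq_top_iff)
  ultimately show ?thesis
    by (metis add.commute ennreal_add_eq_top ennreal_add_left_cancel infinity_ennreal_def)
qed

lemma distr_pair_balanced_decompositions_eq:
  assumes \<mu>: "prob_space \<mu>"
    and indep_fst: "indep_rv (\<mu> \<Otimes>\<^sub>M \<mu>) \<mu> fst N g" and indep_snd: "indep_rv (\<mu> \<Otimes>\<^sub>M \<mu>) N g \<mu> snd"
    and bd\<mu>: "balanced_decomposition \<mu> \<mu>0 \<mu>1" and bd\<nu>: "balanced_decomposition \<mu> \<nu>0 \<nu>1"
  shows "distr (\<mu>0 \<Otimes>\<^sub>M \<nu>0) N g = distr (\<mu>1 \<Otimes>\<^sub>M \<nu>1) N g"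
proof (rule measure_eqI)
  interpret pair_prob_space \<mu> \<mu>
    using \<mu> by (simp add: pair_prob_space_def pair_sigma_finite_def prob_space_imp_sigma_finite)
  have g: "g \<in> measurable (\<mu> \<Otimes>\<^sub>M \<mu>) N"
    using indep_fst by (simp add: indep_rv_def)
  have sets: "sets (\<mu>0 \<Otimes>\<^sub>M \<nu>0) = sets (\<mu> \<Otimes>\<^sub>M \<mu>)" "sets (\<mu>1 \<Otimes>\<^sub>M \<nu>1) = sets (\<mu> \<Otimes>\<^sub>M \<mu>)"
    using balanced_decompositionD(3,4)[OF bd\<mu>] balanced_decompositionD(3,4)[OF bd\<nu>]
    by (simp_all cong: sets_pair_measure_cong)
  show "sets (distr (\<mu>0 \<Otimes>\<^sub>M \<nu>0) N g) = sets (distr (\<mu>1 \<Otimes>\<^sub>M \<nu>1) N g)"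
    by simp
  fix B assume "B \<in> sets (distr (\<mu>0 \<Otimes>\<^sub>M \<nu>0) N g)"
  then have B: "B \<in> sets N" by simp
  have "emeasure (\<mu>0 \<Otimes>\<^sub>M \<nu>0) (g -` B \<inter> space (\<mu> \<Otimes>\<^sub>M \<mu>))
      = emeasure (\<mu>1 \<Otimes>\<^sub>M \<nu>1) (g -` B \<inter> space (\<mu> \<Otimes>\<^sub>M \<mu>))"
    using measurable_sets[OF g B] P.emeasure_finite
    by (intro emeasure_pair_balanced_decompositions_eq[OF _ _ AE_emeasure_Pair_eq_of_indep_rv_fst[OF indep_fst B]
          AE_emeasure_Pair_eq_of_indep_rv_snd[OF indep_snd B] bd\<mu> bd\<nu>]) auto
  then show "emeasure (distr (\<mu>0 \<Otimes>\<^sub>M \<nu>0) N g) B = emeasure (distr (\<mu>1 \<Otimes>\<^sub>M \<nu>1) N g) B"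
    using B g sets by (simp add: emeasure_distr measurable_cong_sets[OF sets(1) refl]
        measurable_cong_sets[OF sets(2) refl] sets_eq_imp_space_eq[OF sets(1)] sets_eq_imp_space_eq[OF sets(2)])
qed

lemma indep_rv_fst_iff_snd_of_antisymmetric:
  assumes \<mu>: "prob_space \<mu>" and f: "f \<in> measurable (\<mu> \<Otimes>\<^sub>M \<mu>) M" and i: "i \<in> measurable M M"
    and antisym: "\<And>x y. x \<in> space \<mu> \<Longrightarrow> y \<in> space \<mu> \<Longrightarrow> f (x, y) = i (f (y, x))"
  shows "indep_rv (\<mu> \<Otimes>\<^sub>M \<mu>) \<mu> fst M f \<longleftrightarrow> indep_rv (\<mu> \<Otimes>\<^sub>M \<mu>) M f \<mu> snd"
proof -
  interpret pair_prob_space \<mu> \<mu>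
    using \<mu> by (simp add: pair_prob_space_def pair_sigma_finite_def prob_space_imp_sigma_finite)
  let ?s = "\<lambda>(x, y). (y, x)"
  have swap: "indep_rv (\<mu> \<Otimes>\<^sub>M \<mu>) \<mu> (p \<circ> ?s) M f" if indep: "indep_rv (\<mu> \<Otimes>\<^sub>M \<mu>) \<mu> p M f" for p
  proof -
    have p: "p \<in> measurable (\<mu> \<Otimes>\<^sub>M \<mu>) \<mu>"
      using indep by (simp add: indep_rv_def)
    have "indep_rv (distr (\<mu> \<Otimes>\<^sub>M \<mu>) (\<mu> \<Otimes>\<^sub>M \<mu>) ?s) \<mu> p M f"
      using indep by (simp only: distr_pair_swap[symmetric])
    then have "indep_rv (\<mu> \<Otimes>\<^sub>M \<mu>) \<mu> (p \<circ> ?s) M (f \<circ> ?s)"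
      using indep_rv_distr_iff[OF measurable_pair_swap' p f] by simp
    then have "indep_rv (\<mu> \<Otimes>\<^sub>M \<mu>) \<mu> (p \<circ> ?s) M (i \<circ> (f \<circ> ?s))"
      using i by (rule indep_rv_compose_right)
    moreover have "(i \<circ> (f \<circ> ?s)) \<omega> = f \<omega>" if "\<omega> \<in> space (\<mu> \<Otimes>\<^sub>M \<mu>)" for \<omega>
      using that by (auto simp: space_pair_measure antisym[symmetric])
    ultimately show ?thesis
      using indep_rv_cong[of "\<mu> \<Otimes>\<^sub>M \<mu>" "p \<circ> ?s" "p \<circ> ?s" "i \<circ> (f \<circ> ?s)" f] by simp
  qed
  have fst: "fst \<circ> ?s = snd" and snd: "snd \<circ> ?s = fst"
    by auto
  show ?thesis
  proof
    assume "indep_rv (\<mu> \<Otimes>\<^sub>M \<mu>) \<mu> fst M f"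
    from swap[OF this] show "indep_rv (\<mu> \<Otimes>\<^sub>M \<mu>) M f \<mu> snd"
      unfolding fst by (rule indep_rv_commute)
  next
    assume "indep_rv (\<mu> \<Otimes>\<^sub>M \<mu>) M f \<mu> snd"
    from swap[OF indep_rv_commute[OF this]] show "indep_rv (\<mu> \<Otimes>\<^sub>M \<mu>) \<mu> fst M f"
      unfolding snd .
  qed
qed

theorem corollary4p1:
  fixes \<mu> :: "'a measure" and M :: "'b measure" and f :: "'a \<times> 'a \<Rightarrow> 'b"
    and i :: "'b \<Rightarrow> 'b" and P :: "'c measure" and X Y :: "'c \<Rightarrow> 'a"
  assumes mu: "prob_space \<mu>"
    and f_meas: "f \<in> measurable (\<mu> \<Otimes>\<^sub>M \<mu>) M"
    and i_meas: "i \<in> measurable M M"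
    and i_inv: "\<And>m. m \<in> space M \<Longrightarrow> i (i m) = m"
    and antisym: "\<And>x y. x \<in> space \<mu> \<Longrightarrow> y \<in> space \<mu> \<Longrightarrow> f (x, y) = i (f (y, x))"
    and P: "prob_space P"
    and X_law: "distr P \<mu> X = \<mu>" and Y_law: "distr P \<mu> Y = \<mu>"
    and XY: "indep_rv P \<mu> X \<mu> Y"
  defines "F \<equiv> (\<lambda>\<omega>. f (X \<omega>, Y \<omega>))"
  shows
    "(indep_rv P M F \<mu> Y \<longrightarrow>
        indep_rv P \<mu> X M F \<and>
        (indep_rv P \<mu> X \<mu> Y \<and> indep_rv P \<mu> X M F \<and> indep_rv P M F \<mu> Y))
   \<and> (indep_rv P \<mu> X M F \<longrightarrow>
        indep_rv P M F \<mu> Y \<and>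
        (indep_rv P \<mu> X \<mu> Y \<and> indep_rv P \<mu> X M F \<and> indep_rv P M F \<mu> Y))
   \<and> ((indep_rv P \<mu> X \<mu> Y \<and> indep_rv P \<mu> X M F \<and> indep_rv P M F \<mu> Y) \<longrightarrow>
        (\<forall>\<mu>0 \<mu>1. balanced_decomposition \<mu> \<mu>0 \<mu>1 \<longrightarrow>
           (\<forall>(P0 :: 'd measure) X0 Y0 (P1 :: 'e measure) X1 Y1.
              prob_space P0 \<and> distr P0 \<mu> X0 = \<mu>0 \<and> distr P0 \<mu> Y0 = \<mu>0 \<and>
              indep_rv P0 \<mu> X0 \<mu> Y0 \<and>
              prob_space P1 \<and> distr P1 \<mu> X1 = \<mu>1 \<and> distr P1 \<mu> Y1 = \<mu>1 \<and>
              indep_rv P1 \<mu> X1 \<mu> Y1 \<longrightarrow>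
              distr P0 M (\<lambda>\<omega>. f (X0 \<omega>, Y0 \<omega>)) = distr P1 M (\<lambda>\<omega>. f (X1 \<omega>, Y1 \<omega>))))
      \<and> (\<forall>\<mu>0 \<mu>1 \<nu>0 \<nu>1. balanced_decomposition \<mu> \<mu>0 \<mu>1 \<longrightarrow> balanced_decomposition \<mu> \<nu>0 \<nu>1 \<longrightarrow>
           (\<forall>(P0 :: 'f measure) X0 Y0 (P1 :: 'g measure) X1 Y1.
              prob_space P0 \<and> distr P0 \<mu> X0 = \<mu>0 \<and> distr P0 \<mu> Y0 = \<nu>0 \<and>
              indep_rv P0 \<mu> X0 \<mu> Y0 \<and>
              prob_space P1 \<and> distr P1 \<mu> X1 = \<mu>1 \<and> distr P1 \<mu> Y1 = \<nu>1 \<and>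
              indep_rv P1 \<mu> X1 \<mu> Y1 \<longrightarrow>
              distr P0 M (\<lambda>\<omega>. f (X0 \<omega>, Y0 \<omega>)) = distr P1 M (\<lambda>\<omega>. f (X1 \<omega>, Y1 \<omega>)))))"
proof -
  let ?Z = "\<lambda>\<omega>. (X \<omega>, Y \<omega>)"
  have Z: "?Z \<in> measurable P (\<mu> \<Otimes>\<^sub>M \<mu>)"
    using XY by (auto simp: indep_rv_def)
  have law: "distr P (\<mu> \<Otimes>\<^sub>M \<mu>) ?Z = \<mu> \<Otimes>\<^sub>M \<mu>"
    using distr_pair_indep_rv[OF P XY] X_law Y_law by simp
  have XF: "indep_rv P \<mu> X M F \<longleftrightarrow> indep_rv (\<mu> \<Otimes>\<^sub>M \<mu>) \<mu> fst M f"
    using indep_rv_distr_iff[OF Z measurable_fst f_meas] law by (simp add: F_def comp_def)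
  have FY: "indep_rv P M F \<mu> Y \<longleftrightarrow> indep_rv (\<mu> \<Otimes>\<^sub>M \<mu>) M f \<mu> snd"
    using indep_rv_distr_iff[OF Z f_meas measurable_snd] law by (simp add: F_def comp_def)
  have XF_iff_FY: "indep_rv P \<mu> X M F \<longleftrightarrow> indep_rv P M F \<mu> Y"
    unfolding XF FY using mu f_meas i_meas antisym by (rule indep_rv_fst_iff_snd_of_antisymmetric)
  have laws_eq: "distr (\<mu>0 \<Otimes>\<^sub>M \<nu>0) M f = distr (\<mu>1 \<Otimes>\<^sub>M \<nu>1) M f"
    if "indep_rv P \<mu> X M F" "indep_rv P M F \<mu> Y"
      "balanced_decomposition \<mu> \<mu>0 \<mu>1" "balanced_decomposition \<mu> \<nu>0 \<nu>1" for \<mu>0 \<mu>1 \<nu>0 \<nu>1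
    using that XF FY by (intro distr_pair_balanced_decompositions_eq[OF mu]) auto
  show ?thesis
    using XF_iff_FY XY laws_eq by (auto simp: distr_comp_pair_indep_rv[where Ma = \<mu> and Mb = \<mu>, OF _ _ f_meas])
qed

end
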